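(* For all $k\in\mathbb N$, all $n>k$ and all irrational $x\in(0,1)$, $$|\delta_k(T^{n-k}x)-\delta_n(x)|<-\log(1-2^{-k/2}).$$
   Context: $T:(0,1)\to[0,1)$ is the Gauss map $T(x)=\{1/x\}$ (fractional part of $1/x$). For irrational $x\in(0,1)$ with continued fraction expansion $[a_1,a_2,\ldots]$, $q_n(x)$ is the denominator (in lowest terms) of the $n$-th convergent $p_n/q_n=[a_1,\ldots,a_n]$, and $\delta_n(x)=\log q_n(x)+\sum_{j=0}^{n-1}\log(T^jx)$, with $\log$ the natural logarithm. *)

theory Defs
  imports Complex_Main
begin

definition gauss :: "real \<Rightarrow> real" where
  "gauss x = frac (1 / x)"

definition cf_digit :: "nat \<Rightarrow> real \<Rightarrow> nat" where
  "cf_digit j x = nat \<lfloor>1 / ((gauss ^^ (j - 1)) x)\<rfloor>"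

fun cf_eval :: "nat list \<Rightarrow> rat" where
  "cf_eval [] = 0"
| "cf_eval (a # as) = 1 / (of_nat a + cf_eval as)"

definition convergent :: "nat \<Rightarrow> real \<Rightarrow> rat" where
  "convergent n x = cf_eval (map (\<lambda>j. cf_digit j x) [1..<n+1])"

definition cf_q :: "nat \<Rightarrow> real \<Rightarrow> int" where
  "cf_q n x = snd (quotient_of (convergent n x))"

definition cf_delta :: "nat \<Rightarrow> real \<Rightarrow> real" where
  "cf_delta n x = ln (real_of_int (cf_q n x)) + (\<Sum>j<n. ln ((gauss ^^ j) x))"

end

theory Submission
  imports Defs
begin

text \<open>For irrational x, iterating x = 1/(a_1 + T x) gives
  x * T x * ... * T^(n-1) x = 1/(q_n + T^n x * q_(n-1)), hence
  delta_n(x) = - ln (1 + T^n x * q_(n-1)/q_n).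
  The digits of T^(n-k) x are the last k digits of x, so delta_k(T^(n-k) x) is given by the same
  formula with q_(n-1)/q_n replaced by the corresponding ratio for these k digits. Prepending the
  first n-k digits moves that ratio by a Moebius map, hence by at most 1/(q_k (q_k + p_k)) <= 2^-k,
  where p_k/q_k = [a_(n-k+1), ..., a_n]. As ln (1 + t) is 1-Lipschitz for t >= 0 and T^n x < 1, the two
  values of delta differ by at most 2^-k < 2^(-k/2) < - ln (1 - 2^(-k/2)).\<close>

text \<open>For L = [a_1, ..., a_n], cf_num L / cf_den L = p_n/q_n and cf_num_prev L / cf_den_prev L =
  p_(n-1)/q_(n-1): these are the entries of the matrix product of the [[0, 1], [1, a_i]], and the
  recursion multiplies by the first factor.\<close>
fun cf_num :: "nat list \<Rightarrow> nat" and cf_num_prev :: "nat list \<Rightarrow> nat"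
  and cf_den :: "nat list \<Rightarrow> nat" and cf_den_prev :: "nat list \<Rightarrow> nat" where
  "cf_num [] = 0"
| "cf_num (a # L) = cf_den L"
| "cf_num_prev [] = 1"
| "cf_num_prev (a # L) = cf_den_prev L"
| "cf_den [] = 1"
| "cf_den (a # L) = a * cf_den L + cf_num L"
| "cf_den_prev [] = 0"
| "cf_den_prev (a # L) = a * cf_den_prev L + cf_num_prev L"

definition cf_den_ratio :: "nat list \<Rightarrow> real" where
  "cf_den_ratio L = real (cf_den_prev L) / real (cf_den L)"

lemma cf_continuants_append:
  "cf_num (P @ M) = cf_num P * cf_den M + cf_num_prev P * cf_num M \<and>
   cf_num_prev (P @ M) = cf_num P * cf_den_prev M + cf_num_prev P * cf_num_prev M \<and>
   cf_den (P @ M) = cf_den P * cf_den M + cf_den_prev P * cf_num M \<and>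
   cf_den_prev (P @ M) = cf_den P * cf_den_prev M + cf_den_prev P * cf_num_prev M"
  by (induction P) (auto simp: algebra_simps)

lemma cf_continuants_det:
  "real (cf_num L) * real (cf_den_prev L) - real (cf_num_prev L) * real (cf_den L)
     = (-1) ^ Suc (length L)"
  by (induction L) (auto simp: algebra_simps)

lemma cf_den_ge_1: "\<forall>a\<in>set L. a \<ge> 1 \<Longrightarrow> cf_den L \<ge> 1"
  by (induction L) (auto intro: trans_le_add1)

lemma cf_den_prev_le_den:
  "\<forall>a\<in>set L. a \<ge> 1 \<Longrightarrow>
    cf_den_prev L \<le> cf_den L \<and> (L \<noteq> [] \<longrightarrow> cf_num_prev L \<le> cf_num L)"
proof (induction L)
  case (Cons a L)
  then show ?case by (cases "L = []") (auto intro: add_mono)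
qed simp

lemma cf_den_growth: "\<forall>a\<in>set L. a \<ge> 1 \<Longrightarrow> 2 ^ length L \<le> cf_den L * (cf_den L + cf_num L)"
proof (induction L)
  case (Cons a L)
  let ?c = "cf_den L" and ?p = "cf_num L"
  have "2 * (?c * (?c + ?p)) \<le> (?c + ?p) * (2 * ?c + ?p)"
    by (simp add: algebra_simps)
  moreover have "?c \<le> a * ?c" using Cons.prems by simp
  then have "(?c + ?p) * (2 * ?c + ?p) \<le> cf_den (a # L) * (cf_den (a # L) + cf_num (a # L))"
    by (simp add: mult_mono add_mono)
  ultimately have "2 * (?c * (?c + ?p)) \<le> cf_den (a # L) * (cf_den (a # L) + cf_num (a # L))"
    by (rule order_trans)
  moreover have "2 ^ length L \<le> ?c * (?c + ?p)" using Cons by simp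
  ultimately show ?case by simp
qed simp

lemma coprime_cf_num_den: "coprime (cf_num L) (cf_den L)"
  by (induction L) (simp_all add: coprime_iff_gcd_eq_1 gcd_add_mult gcd.commute)

lemma cf_eval_eq: "\<forall>a\<in>set L. a \<ge> 1 \<Longrightarrow> cf_eval L = of_nat (cf_num L) / of_nat (cf_den L)"
proof (induction L)
  case (Cons a L)
  then have "cf_den L \<ge> 1" using cf_den_ge_1 by simp
  have "cf_eval (a # L) = 1 / (of_nat a + of_nat (cf_num L) / of_nat (cf_den L))"
    using Cons by simp
  also have "\<dots> = of_nat (cf_den L) / (of_nat a * of_nat (cf_den L) + of_nat (cf_num L))"
    using \<open>cf_den L \<ge> 1\<close> by (simp add: field_simps)
  finally show ?case by simp
qed simp

lemma quotient_of_cf_eval: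
  assumes "\<forall>a\<in>set L. a \<ge> 1"
  shows "quotient_of (cf_eval L) = (int (cf_num L), int (cf_den L))"
proof -
  have "cf_eval L = Fract (int (cf_num L)) (int (cf_den L))"
    using cf_eval_eq[OF assms] by (simp add: Fract_of_int_quotient)
  moreover have "coprime (int (cf_num L)) (int (cf_den L))"
    using coprime_cf_num_den by simp
  ultimately show ?thesis
    using cf_den_ge_1[OF assms] by (simp add: quotient_of_Fract)
qed

lemma cf_den_add_pos:
  assumes "\<forall>a\<in>set L. a \<ge> 1" "t \<ge> 0"
  shows "real (cf_den L) + t * real (cf_den_prev L) > 0"
  using cf_den_ge_1[OF assms(1)] assms(2) by (simp add: add_pos_nonneg)

lemma gauss_irrational:
  assumes "x \<in> {0<..<1}" "x \<notin> \<rat>"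
  shows "gauss x \<in> {0<..<1}" "gauss x \<notin> \<rat>"
proof -
  have "1 / x \<notin> \<rat>"
    using Rats_inverse[of "1 / x"] assms by auto
  moreover have "1 / x = gauss x + of_int \<lfloor>1 / x\<rfloor>" by (simp add: gauss_def frac_def)
  ultimately show "gauss x \<notin> \<rat>" using Rats_add Rats_of_int by metis
  then have "gauss x \<noteq> 0" by auto
  then show "gauss x \<in> {0<..<1}"
    using frac_ge_0 frac_lt_1 by (simp add: gauss_def less_le)
qed

lemma cf_digit_1_eq_floor: "x > 0 \<Longrightarrow> real (cf_digit 1 x) = of_int \<lfloor>1 / x\<rfloor>"
  by (simp add: cf_digit_def)

lemma cf_digit_1_ge_1:
  assumes "x \<in> {0<..<1}"
  shows "cf_digit 1 x \<ge> 1"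
proof -
  have "1 < 1 / x" using assms by simp
  then have "real (cf_digit 1 x) \<ge> 1"
    using cf_digit_1_eq_floor[of x] assms by (simp add: le_floor_iff)
  then show ?thesis by simp
qed

lemma cf_digit_1_gauss: "x > 0 \<Longrightarrow> x = 1 / (real (cf_digit 1 x) + gauss x)"
  using cf_digit_1_eq_floor[of x] by (simp add: gauss_def frac_def)

lemma funpow_gauss_irrational:
  assumes "x \<in> {0<..<1}" "x \<notin> \<rat>"
  shows "(gauss ^^ j) x \<in> {0<..<1} \<and> (gauss ^^ j) x \<notin> \<rat>"
  by (induction j) (use assms gauss_irrational in auto)

definition cf_digits :: "nat \<Rightarrow> real \<Rightarrow> nat list" where
  "cf_digits n x = map (\<lambda>j. cf_digit j x) [1..<n+1]"

lemma length_cf_digits [simp]: "length (cf_digits n x) = n"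
  by (simp add: cf_digits_def)

lemma cf_digits_0 [simp]: "cf_digits 0 x = []"
  by (simp add: cf_digits_def)

lemma convergent_eq_cf_eval: "convergent n x = cf_eval (cf_digits n x)"
  by (simp add: convergent_def cf_digits_def)

lemma cf_digits_Suc: "cf_digits (Suc n) x = cf_digit 1 x # cf_digits n (gauss x)"
proof -
  have "cf_digit (Suc j) (gauss x) = cf_digit (Suc (Suc j)) x" for j
    by (simp add: cf_digit_def funpow_Suc_right del: funpow.simps)
  then show ?thesis
    by (simp add: cf_digits_def upt_conv_Cons map_Suc_upt[symmetric] del: upt_Suc)
qed

lemma cf_digits_add:
  "cf_digits (m + n) x = cf_digits m x @ cf_digits n ((gauss ^^ m) x)"
  by (induction m arbitrary: x) (simp_all add: cf_digits_Suc funpow_Suc_right del: funpow.simps)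

lemma cf_digits_ge_1:
  assumes "x \<in> {0<..<1}" "x \<notin> \<rat>"
  shows "\<forall>a\<in>set (cf_digits n x). a \<ge> 1"
  using assms
proof (induction n arbitrary: x)
  case (Suc n)
  then show ?case
    using gauss_irrational[OF Suc.prems] cf_digit_1_ge_1[OF Suc.prems(1)] by (simp add: cf_digits_Suc)
qed simp

lemma cf_expansion:
  assumes "x \<in> {0<..<1}" "x \<notin> \<rat>" and "L = cf_digits n x"
  shows "x = (real (cf_num L) + (gauss ^^ n) x * real (cf_num_prev L)) /
    (real (cf_den L) + (gauss ^^ n) x * real (cf_den_prev L))"
  using assms
proof (induction n arbitrary: x L)
  case (Suc n x L')
  define L where "L = cf_digits n (gauss x)"
  define t where "t = (gauss ^^ n) (gauss x)"
  define N where "N = real (cf_num L) + t * real (cf_num_prev L)"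
  define D where "D = real (cf_den L) + t * real (cf_den_prev L)"
  note g = gauss_irrational[OF Suc.prems(1,2)]
  have "t \<ge> 0" using funpow_gauss_irrational[OF g, of n] by (simp add: t_def)
  then have "D > 0" using cf_den_add_pos cf_digits_ge_1[OF g] by (simp add: D_def L_def)
  have "gauss x = N / D"
    using Suc.IH[OF g L_def] by (simp add: t_def N_def D_def)
  with cf_digit_1_gauss[of x] Suc.prems(1)
  have "x = 1 / (real (cf_digit 1 x) + N / D)" by simp
  also have "\<dots> = D / (real (cf_digit 1 x) * D + N)"
    using \<open>D > 0\<close> by (simp add: field_simps)
  finally have "x = D / (real (cf_digit 1 x) * D + N)" .
  then show ?case
    using Suc.prems(3)
    by (simp add: cf_digits_Suc funpow_Suc_right L_def t_def N_def D_def algebra_simps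
        del: funpow.simps)
qed simp

lemma prod_gauss_orbit:
  assumes "x \<in> {0<..<1}" "x \<notin> \<rat>" and "L = cf_digits n x"
  shows "(\<Prod>j<n. (gauss ^^ j) x) =
    1 / (real (cf_den L) + (gauss ^^ n) x * real (cf_den_prev L))"
  using assms
proof (induction n arbitrary: x L)
  case (Suc n x L')
  define L where "L = cf_digits n (gauss x)"
  define t where "t = (gauss ^^ Suc n) x"
  define D where "D = real (cf_den L) + t * real (cf_den_prev L)"
  note g = gauss_irrational[OF Suc.prems(1,2)]
  have t: "t = (gauss ^^ n) (gauss x)" by (simp add: t_def funpow_Suc_right del: funpow.simps)
  have "t \<ge> 0" using funpow_gauss_irrational[OF g, of n] by (simp add: t)
  then have "D > 0" using cf_den_add_pos cf_digits_ge_1[OF g] by (simp add: D_def L_def)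
  have "(\<Prod>j<Suc n. (gauss ^^ j) x) = x * (\<Prod>j<n. (gauss ^^ j) (gauss x))"
    unfolding prod.lessThan_Suc_shift by (simp add: funpow_Suc_right del: funpow.simps)
  also have "\<dots> = x / D"
    using Suc.IH[OF g L_def] by (simp add: D_def t)
  also have "\<dots> = 1 / (real (cf_den L') + t * real (cf_den_prev L'))"
  proof -
    have "x = D / (real (cf_den L') + t * real (cf_den_prev L'))"
      using cf_expansion[OF Suc.prems] Suc.prems(3)
      by (simp add: cf_digits_Suc L_def D_def t_def)
    with \<open>D > 0\<close> show ?thesis by simp
  qed
  finally show ?case by (simp add: t_def)
qed simp

lemma cf_q_eq_cf_den:
  assumes "x \<in> {0<..<1}" "x \<notin> \<rat>"
  shows "cf_q n x = int (cf_den (cf_digits n x))"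
  using quotient_of_cf_eval[OF cf_digits_ge_1[OF assms]]
  by (simp add: cf_q_def convergent_eq_cf_eval)

lemma cf_delta_eq:
  assumes "x \<in> {0<..<1}" "x \<notin> \<rat>"
  shows "cf_delta n x = - ln (1 + (gauss ^^ n) x * cf_den_ratio (cf_digits n x))"
proof -
  define L where "L = cf_digits n x"
  define t where "t = (gauss ^^ n) x"
  have orbit: "(gauss ^^ j) x > 0" for j using funpow_gauss_irrational[OF assms] by simp
  have q: "real (cf_den L) \<ge> 1" using cf_den_ge_1 cf_digits_ge_1[OF assms] by (simp add: L_def)
  have "(\<Sum>j<n. ln ((gauss ^^ j) x)) = ln (\<Prod>j<n. (gauss ^^ j) x)"
    using orbit by (simp add: ln_prod less_imp_neq[symmetric])
  also have "\<dots> = - ln (real (cf_den L) + t * real (cf_den_prev L))"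
    using prod_gauss_orbit[OF assms L_def] q orbit[of n]
    by (simp add: t_def ln_div add_pos_nonneg)
  finally have "cf_delta n x = ln (real (cf_den L)) - ln (real (cf_den L) + t * real (cf_den_prev L))"
    by (simp add: cf_delta_def cf_q_eq_cf_den[OF assms] L_def)
  also have "\<dots> = - ln (1 + t * cf_den_ratio L)"
  proof -
    have "real (cf_den L) + t * real (cf_den_prev L) = real (cf_den L) * (1 + t * cf_den_ratio L)"
      using q by (simp add: cf_den_ratio_def field_simps)
    moreover have "1 + t * cf_den_ratio L > 0"
      using orbit[of n] by (simp add: t_def cf_den_ratio_def add_pos_nonneg)
    ultimately show ?thesis using q by (simp add: ln_mult)
  qed
  finally show ?thesis by (simp add: L_def t_def)
qed

lemma cf_den_ratio_append:
  assumes "\<forall>a\<in>set P. a \<ge> 1"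
  shows "cf_den_ratio (P @ M) = (real (cf_den_prev M) + cf_den_ratio P * real (cf_num_prev M)) /
    (real (cf_den M) + cf_den_ratio P * real (cf_num M))"
proof -
  define s where "s = cf_den_ratio P"
  have cp: "real (cf_den P) \<ge> 1" using cf_den_ge_1[OF assms] by simp
  then have "real (cf_den_prev P) = real (cf_den P) * s" by (simp add: s_def cf_den_ratio_def)
  then have "real (cf_den_prev (P @ M)) = real (cf_den P) * (real (cf_den_prev M) + s * real (cf_num_prev M))"
    and "real (cf_den (P @ M)) = real (cf_den P) * (real (cf_den M) + s * real (cf_num M))"
    using cf_continuants_append[of P M] by (simp_all add: algebra_simps)
  with cp show ?thesis by (simp add: cf_den_ratio_def s_def)
qed

lemma abs_moebius_diff_le:
  fixes a b c d s :: real
  assumes "c > 0" "a \<ge> 0" "0 \<le> s" "s \<le> 1" and det: "\<bar>c * b - d * a\<bar> = 1"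
  shows "\<bar>(d + s * b) / (c + s * a) - d / c\<bar> \<le> 1 / (c * (c + a))"
proof -
  have pos: "c + s * a > 0" using assms by (simp add: add_pos_nonneg)
  have "(d + s * b) / (c + s * a) - d / c = s * (c * b - d * a) / (c * (c + s * a))"
    using pos \<open>c > 0\<close> by (simp add: field_simps)
  then have "\<bar>(d + s * b) / (c + s * a) - d / c\<bar> = s / (c * (c + s * a))"
    using pos assms by (simp add: abs_mult)
  also have "\<dots> \<le> 1 / (c * (c + a))"
  proof -
    have "s * c \<le> c" using assms by (simp add: mult_left_le_one_le)
    then have "s * (c * (c + a)) \<le> c * (c + s * a)" using \<open>c > 0\<close> by (simp add: algebra_simps)
    then show ?thesis using pos assms by (simp add: divide_simps add_pos_nonneg)
  qed
  finally show ?thesis .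
qed

lemma cf_den_ratio_append_close:
  assumes "\<forall>a\<in>set P. a \<ge> 1" "\<forall>a\<in>set M. a \<ge> 1"
  shows "\<bar>cf_den_ratio (P @ M) - cf_den_ratio M\<bar> \<le> 1 / 2 ^ length M"
proof -
  let ?a = "real (cf_num M)" and ?b = "real (cf_num_prev M)"
  let ?c = "real (cf_den M)" and ?d = "real (cf_den_prev M)"
  have c: "?c \<ge> 1" using cf_den_ge_1[OF assms(2)] by simp
  have "\<bar>?c * ?b - ?d * ?a\<bar> = 1"
    using cf_continuants_det[of M] by (cases "even (length M)") (auto simp: algebra_simps)
  moreover have "0 \<le> cf_den_ratio P" "cf_den_ratio P \<le> 1"
    using cf_den_prev_le_den[OF assms(1)] cf_den_ge_1[OF assms(1)]
    by (simp_all add: cf_den_ratio_def)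
  ultimately have "\<bar>cf_den_ratio (P @ M) - cf_den_ratio M\<bar> \<le> 1 / (?c * (?c + ?a))"
    using abs_moebius_diff_le[of ?c ?a "cf_den_ratio P" ?b ?d] c
    by (simp add: cf_den_ratio_append[OF assms(1)] cf_den_ratio_def[of M])
  also have "\<dots> \<le> 1 / 2 ^ length M"
  proof -
    have "real (2 ^ length M) \<le> real (cf_den M * (cf_den M + cf_num M))"
      using cf_den_growth[OF assms(2)] by (simp only: of_nat_le_iff)
    then show ?thesis by (simp add: frac_le)
  qed
  finally show ?thesis .
qed

lemma ln_one_plus_diff_le:
  fixes a b :: real
  assumes "a \<ge> 0" "b \<ge> 0"
  shows "\<bar>ln (1 + a) - ln (1 + b)\<bar> \<le> \<bar>a - b\<bar>"
proof -
  have "ln (1 + u) - ln (1 + v) \<le> \<bar>u - v\<bar>" if "u \<ge> 0" "v \<ge> 0" for u v :: real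
  proof -
    have "ln (1 + u) - ln (1 + v) \<le> (u - v) / (1 + v)"
      using ln_diff_le[of "1 + u" "1 + v"] that by simp
    also have "\<dots> \<le> \<bar>u - v\<bar>"
    proof (cases "u \<le> v")
      case True
      then have "(u - v) / (1 + v) \<le> 0" using that by (simp add: divide_nonpos_pos)
      then show ?thesis by linarith
    next
      case False
      then show ?thesis using that divide_left_mono[of 1 "1 + v" "u - v"] by simp
    qed
    finally show ?thesis .
  qed
  from this[OF assms] this[OF assms(2,1)] show ?thesis by (simp add: abs_le_iff abs_minus_commute)
qed

lemma inverse_two_power_lt_minus_ln:
  assumes "k \<ge> 1"
  shows "1 / 2 ^ k < - ln (1 - 2 powr (- real k / 2))"
proof -
  have "1 / 2 ^ k = 2 powr (- real k)" by (simp add: powr_minus powr_realpow divide_inverse)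
  also have "\<dots> < 2 powr (- real k / 2)" using assms by simp
  also have "\<dots> \<le> - ln (1 - 2 powr (- real k / 2))"
    using ln_one_minus_pos_upper_bound[of "2 powr (- real k / 2)"] assms by (simp add: powr_less_one)
  finally show ?thesis .
qed

theorem lemma3p5:
  fixes k n :: nat and x :: real
  assumes "k \<ge> 1" and "n > k"
    and "x \<in> {0<..<1}" and "x \<notin> \<rat>"
  shows "\<bar>cf_delta k ((gauss ^^ (n - k)) x) - cf_delta n x\<bar> < - ln (1 - 2 powr (- real k / 2))"
proof -
  define y where "y = (gauss ^^ (n - k)) x"
  define t where "t = (gauss ^^ n) x"
  define P where "P = cf_digits (n - k) x"
  define M where "M = cf_digits k y"
  have y: "y \<in> {0<..<1}" "y \<notin> \<rat>" using funpow_gauss_irrational[OF assms(3,4)] by (simp_all add: y_def)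
  have t: "0 < t" "t < 1" using funpow_gauss_irrational[OF assms(3,4)] by (simp_all add: t_def)
  have "(gauss ^^ k) y = t"
    using funpow_add[of k "n - k" gauss] assms(2) by (simp add: y_def t_def)
  then have delta_y: "cf_delta k y = - ln (1 + t * cf_den_ratio M)"
    using cf_delta_eq[OF y] by (simp add: M_def)
  have "cf_digits n x = P @ M" using cf_digits_add[of "n - k" k x] assms(2) by (simp add: P_def M_def y_def)
  then have delta_x: "cf_delta n x = - ln (1 + t * cf_den_ratio (P @ M))"
    using cf_delta_eq[OF assms(3,4)] by (simp add: t_def)
  have ratio: "cf_den_ratio L \<ge> 0" for L by (simp add: cf_den_ratio_def)
  have "\<bar>cf_delta k y - cf_delta n x\<bar> \<le> \<bar>t * cf_den_ratio (P @ M) - t * cf_den_ratio M\<bar>"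
    unfolding delta_x delta_y using ln_one_plus_diff_le t ratio by simp
  also have "\<dots> \<le> \<bar>cf_den_ratio (P @ M) - cf_den_ratio M\<bar>"
    using t by (simp add: right_diff_distrib[symmetric] abs_mult mult_left_le_one_le)
  also have "\<dots> \<le> 1 / 2 ^ k"
    using cf_den_ratio_append_close[OF cf_digits_ge_1[OF assms(3,4)] cf_digits_ge_1[OF y]]
    by (simp add: P_def M_def)
  also have "\<dots> < - ln (1 - 2 powr (- real k / 2))"
    using inverse_two_power_lt_minus_ln[OF assms(1)] .
  finally show ?thesis by (simp add: y_def)
qed

end
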